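(* For any positive integer $k$ and any $\underline{\zeta}\in\mathbb{R}^k$ we have \[ \lambda_{k,1}(\underline{\zeta})=\infty \quad\Longleftrightarrow\quad \widehat{\lambda}_{k,2}(\underline{\zeta})=\widehat{\lambda}_{k,3}(\underline{\zeta})=\cdots=\widehat{\lambda}_{k,k+1}(\underline{\zeta})=0. \]
   Context: For $\underline{\zeta}=(\zeta_1,\ldots,\zeta_k)\in\mathbb{R}^k$ and $1\leq j\leq k+1$, $\lambda_{k,j}(\underline{\zeta})$ (resp. $\widehat{\lambda}_{k,j}(\underline{\zeta})$) is the supremum of all $\eta\in\mathbb{R}$ such that the system $|x|\leq X$, $\max_{1\leq i\leq k}|\zeta_i x-y_i|\leq X^{-\eta}$ has at least $j$ linearly independent solutions $(x,y_1,\ldots,y_k)\in\mathbb{Z}^{k+1}$ for arbitrarily large real $X$ (resp. for all sufficiently large real $X$). *)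

theory Defs
  imports Complex_Main "HOL-Library.Extended_Real"
begin

text \<open>zeta is represented as a function nat => real; only zeta 1, ..., zeta k matter.
  An integer point (x, y_1, ..., y_k) is a function v :: nat => int with v 0 = x, v i = y_i.\<close>

definition approx_sol :: "nat \<Rightarrow> (nat \<Rightarrow> real) \<Rightarrow> real \<Rightarrow> real \<Rightarrow> (nat \<Rightarrow> int) \<Rightarrow> bool" where
  "approx_sol k \<zeta> X \<eta> v \<longleftrightarrow>
     \<bar>real_of_int (v 0)\<bar> \<le> X \<and>
     (\<forall>i\<in>{1..k}. \<bar>\<zeta> i * real_of_int (v 0) - real_of_int (v i)\<bar> \<le> X powr (-\<eta>))"

definition lin_indep_pts :: "nat \<Rightarrow> nat \<Rightarrow> (nat \<Rightarrow> nat \<Rightarrow> int) \<Rightarrow> bool" where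
  "lin_indep_pts k j vs \<longleftrightarrow>
     (\<forall>c :: nat \<Rightarrow> real. (\<forall>t\<le>k. (\<Sum>l<j. c l * real_of_int (vs l t)) = 0) \<longrightarrow> (\<forall>l<j. c l = 0))"

definition has_indep_sols :: "nat \<Rightarrow> (nat \<Rightarrow> real) \<Rightarrow> nat \<Rightarrow> real \<Rightarrow> real \<Rightarrow> bool" where
  "has_indep_sols k \<zeta> j X \<eta> \<longleftrightarrow>
     (\<exists>vs. lin_indep_pts k j vs \<and> (\<forall>l<j. approx_sol k \<zeta> X \<eta> (vs l)))"

definition lambda_exp :: "nat \<Rightarrow> nat \<Rightarrow> (nat \<Rightarrow> real) \<Rightarrow> ereal" where
  "lambda_exp k j \<zeta> = Sup {ereal \<eta> | \<eta>. \<exists>\<^sub>F X in at_top. has_indep_sols k \<zeta> j X \<eta>}"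

definition lambda_hat_exp :: "nat \<Rightarrow> nat \<Rightarrow> (nat \<Rightarrow> real) \<Rightarrow> ereal" where
  "lambda_hat_exp k j \<zeta> = Sup {ereal \<eta> | \<eta>. \<forall>\<^sub>F X in at_top. has_indep_sols k \<zeta> j X \<eta>}"

end

theory Submission
  imports Defs "HOL-Analysis.Kronecker_Approximation_Theorem"
begin

text \<open>If \<open>\<lambda>\<^sub>k\<^sub>,\<^sub>1 = \<infinity>\<close>, pick a solution \<open>w\<close> of exponent \<open>\<eta>' > 1/\<eta>\<close> at some large \<open>X'\<close>. Every
  solution \<open>v\<close> at \<open>X = (3X')\<^bsup>1/\<eta>\<^esup>\<close> of exponent \<open>\<eta> > 0\<close> then satisfies \<open>w\<^sub>0 v\<^sub>i = v\<^sub>0 w\<^sub>i\<close>,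
  because this integer is bounded by \<open>X X'\<^bsup>-\<eta>'\<^esup> + X' X\<^bsup>-\<eta>\<^esup> < 1\<close>; so all such solutions are
  proportional to \<open>w\<close>, and \<open>\<lambda>\<^sub>k\<^sub>,\<^sub>j\<close> with \<open>j \<ge> 2\<close> cannot be positive. It is not negative since the unit
  vectors are solutions of every negative exponent.
  Conversely, Dirichlet's theorem gives solutions \<open>v\<close> at \<open>X\<close> and \<open>v'\<close> at \<open>Y = X\<^sup>c\<close> with error about
  \<open>X\<^bsup>-1/(k+1)\<^esup>\<close> resp. \<open>Y\<^bsup>-1/(k+1)\<^esup>\<close>. If they are proportional, the error of \<open>v'\<close> is at most
  \<open>Y\<close> times that of \<open>v\<close>, which makes \<open>v'\<close> a solution of a prescribed large exponent \<open>M\<close> at \<open>Y\<close>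
  when \<open>c\<close> is small. Hence if \<open>\<lambda>\<^sub>k\<^sub>,\<^sub>1 < M\<close>, two independent solutions exist at every large \<open>X\<close>
  for some positive exponent, i.e. \<open>\<lambda>\<^sub>k\<^sub>,\<^sub>2 > 0\<close>.\<close>

lemma eventually_le_powr_at_top:
  fixes C b :: real
  assumes "b > 0"
  shows "\<forall>\<^sub>F X in at_top. C \<le> X powr b"
proof -
  have "C \<le> X powr b" if "max 1 (\<bar>C\<bar> powr (1/b)) \<le> X" for X
  proof -
    have "C \<le> (\<bar>C\<bar> powr (1/b)) powr b"
      using assms by (simp add: powr_powr)
    also have "\<dots> \<le> X powr b"
      using that assms by (intro powr_mono2) auto
    finally show ?thesis .
  qed
  then show ?thesis
    unfolding eventually_at_top_linorder by blast
qed

lemma eventually_mult_powr_le_powr_at_top: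
  fixes C s t :: real
  assumes "t < s"
  shows "\<forall>\<^sub>F X in at_top. C * X powr (-s) \<le> X powr (-t)"
proof -
  have "\<forall>\<^sub>F X in at_top. C \<le> X powr (s - t) \<and> 0 < X"
    using assms by (intro eventually_conj eventually_le_powr_at_top eventually_gt_at_top) auto
  then show ?thesis
  proof (rule eventually_mono)
    fix X :: real
    assume X: "C \<le> X powr (s - t) \<and> 0 < X"
    then have "C * X powr (-s) \<le> X powr (s - t) * X powr (-s)"
      by (intro mult_right_mono) auto
    also have "\<dots> = X powr (-t)"
      using X by (simp add: powr_add[symmetric])
    finally show "C * X powr (-s) \<le> X powr (-t)" .
  qed
qed

lemma lin_indep_pts_1_iff: "lin_indep_pts k 1 vs \<longleftrightarrow> (\<exists>t\<le>k. vs 0 t \<noteq> 0)"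
proof
  assume "lin_indep_pts k 1 vs"
  then have "\<not> (\<forall>t\<le>k. (\<Sum>l<1. (\<lambda>_. 1::real) l * real_of_int (vs l t)) = 0)"
    unfolding lin_indep_pts_def by force
  then show "\<exists>t\<le>k. vs 0 t \<noteq> 0" by auto
qed (auto simp: lin_indep_pts_def)

lemma lin_indep_pts_mono:
  assumes "lin_indep_pts k j vs" "i \<le> j"
  shows "lin_indep_pts k i vs"
  unfolding lin_indep_pts_def
proof (intro allI impI)
  fix c :: "nat \<Rightarrow> real" and l
  assume c: "\<forall>t\<le>k. (\<Sum>l<i. c l * real_of_int (vs l t)) = 0" and l: "l < i"
  define c' where "c' l = (if l < i then c l else 0)" for l
  have "(\<Sum>l<j. c' l * real_of_int (vs l t)) = (\<Sum>l<i. c l * real_of_int (vs l t))" for t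
  proof -
    have "(\<Sum>l<j. c' l * real_of_int (vs l t)) = (\<Sum>l<i. c' l * real_of_int (vs l t))"
      using assms(2) by (intro sum.mono_neutral_right) (auto simp: c'_def)
    then show ?thesis by (simp add: c'_def)
  qed
  then have "\<forall>l<j. c' l = 0"
    using assms(1) c unfolding lin_indep_pts_def by metis
  then have "c' l = 0"
    using l assms(2) by simp
  then show "c l = 0"
    using l by (simp add: c'_def)
qed

lemma lin_indep_pts_unit_vectors:
  assumes "j \<le> k + 1"
  shows "lin_indep_pts k j (\<lambda>l t. if t = l then 1 else 0)"
  unfolding lin_indep_pts_def
proof (intro allI impI)
  fix c :: "nat \<Rightarrow> real" and l
  assume c: "\<forall>t\<le>k. (\<Sum>l'<j. c l' * real_of_int (if t = l' then 1 else 0)) = 0" and l: "l < j"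
  have "(\<Sum>l'<j. c l' * real_of_int (if l = l' then 1 else 0)) = c l"
    using l by (simp add: if_distrib cong: if_cong)
  then show "c l = 0"
    using c l assms by force
qed

lemma proportional_if_not_lin_indep_pts_2:
  assumes "\<not> lin_indep_pts k 2 vs" "vs 0 0 \<noteq> 0" "t \<le> k"
  shows "real_of_int (vs 1 t) = real_of_int (vs 1 0) / real_of_int (vs 0 0) * real_of_int (vs 0 t)"
proof -
  obtain d :: "nat \<Rightarrow> real"
    where d: "\<And>s. s \<le> k \<Longrightarrow> d 0 * real_of_int (vs 0 s) + d 1 * real_of_int (vs 1 s) = 0"
      and nonzero: "d 0 \<noteq> 0 \<or> d 1 \<noteq> 0"
    using assms(1) unfolding lin_indep_pts_def by (auto simp: numeral_2_eq_2 less_Suc_eq)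
  have "d 1 \<noteq> 0"
    using d[of 0] nonzero assms(2) by auto
  then have "- d 0 / d 1 = real_of_int (vs 1 0) / real_of_int (vs 0 0)"
    and "real_of_int (vs 1 t) = - d 0 / d 1 * real_of_int (vs 0 t)"
    using d[of 0] d[OF assms(3)] assms(2) by (simp_all add: field_simps)
  then show ?thesis
    by simp
qed

lemma not_lin_indep_pts_2_if_proportional:
  assumes "w 0 \<noteq> (0::int)"
    and proportional: "\<And>l t. l < 2 \<Longrightarrow> t \<le> k \<Longrightarrow> w 0 * vs l t = vs l 0 * w t"
  shows "\<not> lin_indep_pts k 2 vs"
proof -
  define c :: "nat \<Rightarrow> real" where
    "c l = (if vs 0 0 = 0 then (if l = 0 then 1 else 0)
            else if l = 0 then real_of_int (vs 1 0) else - real_of_int (vs 0 0))" for l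
  have "(\<Sum>l<2. c l * real_of_int (vs l t)) = 0" if t: "t \<le> k" for t
  proof (cases "vs 0 0 = 0")
    case True
    then have "vs 0 t = 0"
      using proportional[of 0 t] t assms(1) by simp
    then show ?thesis
      using True by (simp add: c_def numeral_2_eq_2)
  next
    case False
    have "w 0 * (vs 1 0 * vs 0 t - vs 0 0 * vs 1 t) = vs 1 0 * (w 0 * vs 0 t) - vs 0 0 * (w 0 * vs 1 t)"
      by (simp add: algebra_simps)
    also have "\<dots> = 0"
      using proportional[of 0 t] proportional[of 1 t] t by simp
    finally have "real_of_int (vs 1 0 * vs 0 t - vs 0 0 * vs 1 t) = 0"
      using assms(1) by simp
    then show ?thesis
      using False by (simp add: c_def numeral_2_eq_2 algebra_simps)
  qed
  moreover have "c 0 \<noteq> 0 \<or> c 1 \<noteq> 0"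
    by (simp add: c_def)
  ultimately show ?thesis
    unfolding lin_indep_pts_def by force
qed

lemma approx_error_le_if_not_lin_indep_pts_2:
  fixes \<zeta> :: "nat \<Rightarrow> real"
  assumes "\<not> lin_indep_pts k 2 vs" "1 \<le> vs 0 0" "i \<le> k"
  shows "\<bar>\<zeta> i * real_of_int (vs 1 0) - real_of_int (vs 1 i)\<bar>
    \<le> \<bar>real_of_int (vs 1 0)\<bar> * \<bar>\<zeta> i * real_of_int (vs 0 0) - real_of_int (vs 0 i)\<bar>"
proof -
  define r where "r = real_of_int (vs 1 0) / real_of_int (vs 0 0)"
  have "real_of_int (vs 1 0) = r * real_of_int (vs 0 0)"
    using assms(2) by (simp add: r_def)
  moreover have "real_of_int (vs 1 i) = r * real_of_int (vs 0 i)"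
    using proportional_if_not_lin_indep_pts_2[OF assms(1) _ assms(3)] assms(2) by (simp add: r_def)
  ultimately have "\<zeta> i * real_of_int (vs 1 0) - real_of_int (vs 1 i)
      = r * (\<zeta> i * real_of_int (vs 0 0) - real_of_int (vs 0 i))"
    by (simp add: algebra_simps)
  moreover have "\<bar>r\<bar> \<le> \<bar>real_of_int (vs 1 0)\<bar>"
    using assms(2) by (simp add: r_def abs_divide divide_le_eq mult_le_cancel_left1)
  ultimately show ?thesis
    by (simp add: abs_mult mult_right_mono)
qed

lemma has_indep_sols_mono:
  assumes "has_indep_sols k \<zeta> j X \<eta>" "i \<le> j"
  shows "has_indep_sols k \<zeta> i X \<eta>"
proof -
  obtain vs where "lin_indep_pts k j vs" "\<forall>l<j. approx_sol k \<zeta> X \<eta> (vs l)"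
    using assms(1) unfolding has_indep_sols_def by blast
  then show ?thesis
    unfolding has_indep_sols_def using assms(2)
    by (intro exI[of _ vs] conjI lin_indep_pts_mono[of k j vs i]) auto
qed

lemma approx_sol_first_coord_nonzero:
  assumes "approx_sol k \<zeta> X \<eta> v" "X powr (-\<eta>) < 1" "\<exists>t\<le>k. v t \<noteq> 0"
  shows "v 0 \<noteq> 0"
proof
  assume v0: "v 0 = 0"
  have "v t = 0" if "t \<le> k" for t
  proof (cases "t = 0")
    case False
    then have "\<bar>real_of_int (v t)\<bar> \<le> X powr (-\<eta>)"
      using assms(1) v0 that unfolding approx_sol_def by force
    then show ?thesis
      using assms(2) by linarith
  qed (use v0 in simp)
  then show False
    using assms(3) by blast
qed

text \<open>The integer \<open>w\<^sub>0 v\<^sub>i - v\<^sub>0 w\<^sub>i\<close> equals \<open>w\<^sub>0 (\<zeta>\<^sub>i v\<^sub>0 - v\<^sub>i) - v\<^sub>0 (\<zeta>\<^sub>i w\<^sub>0 - w\<^sub>i)\<close>.\<close>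

lemma approx_sol_cross_eq:
  fixes \<zeta> :: "nat \<Rightarrow> real"
  assumes v: "approx_sol k \<zeta> X \<eta> v" and w: "approx_sol k \<zeta> X' \<eta>' w"
    and small: "X * X' powr (-\<eta>') + X' * X powr (-\<eta>) < 1" and i: "i \<le> k"
  shows "w 0 * v i = v 0 * w i"
proof (cases "i = 0")
  case False
  define ev where "ev = \<zeta> i * real_of_int (v 0) - real_of_int (v i)"
  define ew where "ew = \<zeta> i * real_of_int (w 0) - real_of_int (w i)"
  have bounds: "\<bar>real_of_int (v 0)\<bar> \<le> X" "\<bar>real_of_int (w 0)\<bar> \<le> X'"
    "\<bar>ev\<bar> \<le> X powr (-\<eta>)" "\<bar>ew\<bar> \<le> X' powr (-\<eta>')"
    using v w i False unfolding approx_sol_def ev_def ew_def by auto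
  have "\<bar>real_of_int (w 0 * v i - v 0 * w i)\<bar> = \<bar>real_of_int (v 0) * ew - real_of_int (w 0) * ev\<bar>"
    by (simp add: ev_def ew_def algebra_simps)
  also have "\<dots> \<le> \<bar>real_of_int (v 0)\<bar> * \<bar>ew\<bar> + \<bar>real_of_int (w 0)\<bar> * \<bar>ev\<bar>"
    by (simp add: abs_mult[symmetric] abs_triangle_ineq4)
  also have "\<dots> \<le> X * X' powr (-\<eta>') + X' * X powr (-\<eta>)"
    using bounds by (intro add_mono mult_mono) auto
  finally show ?thesis
    using small by linarith
qed simp

lemma Dirichlet_approx_sol:
  fixes \<zeta> :: "nat \<Rightarrow> real" and X :: real
  assumes "1 \<le> X"
  obtains v :: "nat \<Rightarrow> int" where "1 \<le> v 0" "real_of_int (v 0) \<le> X"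
    "\<And>i. i \<in> {1..k} \<Longrightarrow> \<bar>\<zeta> i * real_of_int (v 0) - real_of_int (v i)\<bar> \<le> 2 * X powr (-(1/(real k + 1)))"
proof -
  define a :: real where "a = 1 / (real k + 1)"
  define N where "N = nat \<lfloor>X powr a\<rfloor>"
  have Xa: "1 \<le> X powr a"
    using assms by (simp add: a_def ge_one_powr_ge_zero)
  then have N: "1 \<le> N" "real N \<le> X powr a"
    by (simp_all add: N_def le_nat_iff)
  have "X powr a < real N + 1"
    using Xa by (simp add: N_def)
  then have N2: "X powr a \<le> 2 * real N"
    using N(1) by linarith
  obtain q p where q: "0 < q" "q \<le> int (N ^ (k + 1))"
    and qp: "\<And>i. i < k + 1 \<Longrightarrow> \<bar>of_int q * \<zeta> i - of_int (p i)\<bar> < 1 / N"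
    using Dirichlet_approx_simult[of N "k + 1" \<zeta>] N(1) by auto
  have "real (N ^ (k + 1)) \<le> (X powr a) ^ (k + 1)"
    unfolding of_nat_power using N(2) by (intro power_mono) auto
  also have "\<dots> = X powr (a * real (k + 1))"
    using Xa by (subst powr_realpow[symmetric]) (auto simp: powr_powr)
  also have "\<dots> = X"
    using assms by (simp add: a_def add.commute)
  finally have qX: "real_of_int q \<le> X"
    using q(2) by linarith
  have "1 / real N \<le> 2 / X powr a"
    using N(1) N2 Xa assms by (simp add: field_simps le_divide_eq)
  also have "\<dots> = 2 * X powr (-a)"
    by (simp add: powr_minus divide_inverse)
  finally have "\<bar>\<zeta> i * real_of_int q - real_of_int (p i)\<bar> \<le> 2 * X powr (-a)" if "i \<in> {1..k}" for i
    using qp[of i] that by (simp add: mult.commute)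
  then show ?thesis
    using q(1) qX by (intro that[of "\<lambda>i. if i = 0 then q else p i"]) (auto simp: a_def)
qed

lemma eventually_has_indep_sols_neg_exponent:
  fixes \<zeta> :: "nat \<Rightarrow> real"
  assumes "j \<le> k + 1" "\<eta> < 0"
  shows "\<forall>\<^sub>F X in at_top. has_indep_sols k \<zeta> j X \<eta>"
proof -
  have "\<forall>\<^sub>F X in at_top. 1 \<le> X \<and> (\<Sum>i\<in>{1..k}. \<bar>\<zeta> i\<bar>) + 1 \<le> X powr - \<eta>"
    using assms(2) by (intro eventually_conj eventually_ge_at_top eventually_le_powr_at_top) auto
  then show ?thesis
  proof (rule eventually_mono)
    fix X :: real
    assume X: "1 \<le> X \<and> (\<Sum>i\<in>{1..k}. \<bar>\<zeta> i\<bar>) + 1 \<le> X powr - \<eta>"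
    define vs :: "nat \<Rightarrow> nat \<Rightarrow> int" where "vs l t = (if t = l then 1 else 0)" for l t
    have "approx_sol k \<zeta> X \<eta> (vs l)" for l
      unfolding approx_sol_def
    proof (intro conjI ballI)
      show "\<bar>real_of_int (vs l 0)\<bar> \<le> X"
        using X by (simp add: vs_def)
      fix i assume i: "i \<in> {1..k}"
      have "\<bar>\<zeta> i * real_of_int (vs l 0) - real_of_int (vs l i)\<bar> \<le> \<bar>\<zeta> i\<bar> + 1"
        by (auto simp: vs_def)
      also have "\<dots> \<le> (\<Sum>i\<in>{1..k}. \<bar>\<zeta> i\<bar>) + 1"
        using i by (intro add_right_mono member_le_sum) auto
      finally show "\<bar>\<zeta> i * real_of_int (vs l 0) - real_of_int (vs l i)\<bar> \<le> X powr - \<eta>"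
        using X by linarith
    qed
    then show "has_indep_sols k \<zeta> j X \<eta>"
      using lin_indep_pts_unit_vectors[OF assms(1)] unfolding has_indep_sols_def vs_def by blast
  qed
qed

lemma not_eventually_two_indep_sols:
  fixes \<zeta> :: "nat \<Rightarrow> real"
  assumes \<eta>: "0 < \<eta>" "1 < \<eta> * \<eta>'"
    and freq: "\<exists>\<^sub>F X in at_top. has_indep_sols k \<zeta> 1 X \<eta>'"
  shows "\<not> (\<forall>\<^sub>F X in at_top. has_indep_sols k \<zeta> 2 X \<eta>)"
proof
  assume "\<forall>\<^sub>F X in at_top. has_indep_sols k \<zeta> 2 X \<eta>"
  then obtain X1 where X1: "\<And>X. X1 \<le> X \<Longrightarrow> has_indep_sols k \<zeta> 2 X \<eta>"
    unfolding eventually_at_top_linorder by blast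
  have "1/\<eta> < \<eta>'"
    using \<eta> by (simp add: field_simps)
  then have "\<forall>\<^sub>F X' in at_top. 2 \<le> X' \<and> X1 \<le> X' powr (1/\<eta>)
      \<and> 2 * 3 powr (1/\<eta>) * X' powr (-(\<eta>' - 1/\<eta>)) \<le> X' powr (-0)"
    using \<eta>(1) by (intro eventually_conj eventually_ge_at_top eventually_le_powr_at_top
        eventually_mult_powr_le_powr_at_top) auto
  from frequently_eventually_conj[OF freq this]
  obtain X' where X': "2 \<le> X'" "X1 \<le> X' powr (1/\<eta>)"
      "2 * 3 powr (1/\<eta>) * X' powr (-(\<eta>' - 1/\<eta>)) \<le> 1"
    and "has_indep_sols k \<zeta> 1 X' \<eta>'"
    by (auto dest: frequently_ex)
  then obtain w where w: "approx_sol k \<zeta> X' \<eta>' w" "\<exists>t\<le>k. w t \<noteq> 0"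
    unfolding has_indep_sols_def lin_indep_pts_1_iff by auto
  have "X' powr (-\<eta>') < 1"
    using X'(1) \<eta> \<open>1/\<eta> < \<eta>'\<close> by (intro powr_less_one) (auto simp: less_trans[of 0 "1/\<eta>"])
  then have w0: "w 0 \<noteq> 0"
    using approx_sol_first_coord_nonzero[OF w(1) _ w(2)] by blast
  define X where "X = (3 * X') powr (1/\<eta>)"
  have "X' powr (1/\<eta>) \<le> X"
    unfolding X_def using X' \<eta> by (intro powr_mono2) auto
  then obtain vs where vs: "lin_indep_pts k 2 vs" "\<And>l. l < 2 \<Longrightarrow> approx_sol k \<zeta> X \<eta> (vs l)"
    using X1[of X] X'(2) unfolding has_indep_sols_def by auto
  have "X * X' powr (-\<eta>') = 3 powr (1/\<eta>) * X' powr (-(\<eta>' - 1/\<eta>))"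
    using X' by (simp add: X_def powr_mult powr_add[symmetric])
  moreover have "X' * X powr (-\<eta>) = 1/3"
    using X' \<eta> by (simp add: X_def powr_powr powr_minus_divide)
  ultimately have "X * X' powr (-\<eta>') + X' * X powr (-\<eta>) < 1"
    using X'(3) by linarith
  then have "w 0 * vs l t = vs l 0 * w t" if "l < 2" "t \<le> k" for l t
    using approx_sol_cross_eq[OF vs(2) w(1)] that by blast
  then show False
    using not_lin_indep_pts_2_if_proportional[where w = w and vs = vs] w0 vs(1) by blast
qed

text \<open>Apply Dirichlet at \<open>X\<close> and at \<open>X\<^sup>c\<close>: either the two approximations are independent, or
  the second one is a multiple of the first and so inherits its much smaller error.\<close>

lemma two_indep_sols_or_one_sol:
  fixes k :: nat and \<zeta> :: "nat \<Rightarrow> real"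
  defines "a \<equiv> 1 / (real k + 1)"
  assumes X: "1 \<le> X" and c: "0 < c" "c \<le> 1"
    and bounds: "2 * X powr (-a) \<le> X powr (-\<eta>)" "2 * X powr (-(c*a)) \<le> X powr (-\<eta>)"
      "2 * X powr (c - a) \<le> X powr (-(c*M))"
  shows "has_indep_sols k \<zeta> 2 X \<eta> \<or> has_indep_sols k \<zeta> 1 (X powr c) M"
proof -
  define Y where "Y = X powr c"
  have Y: "1 \<le> Y" "Y \<le> X"
    using X c powr_mono[of c 1 X] by (simp_all add: Y_def ge_one_powr_ge_zero)
  obtain v where v: "1 \<le> v 0" "real_of_int (v 0) \<le> X"
      "\<And>i. i \<in> {1..k} \<Longrightarrow> \<bar>\<zeta> i * real_of_int (v 0) - real_of_int (v i)\<bar> \<le> 2 * X powr (-a)"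
    using Dirichlet_approx_sol[OF X] unfolding a_def by blast
  obtain v' where v': "1 \<le> v' 0" "real_of_int (v' 0) \<le> Y"
      "\<And>i. i \<in> {1..k} \<Longrightarrow> \<bar>\<zeta> i * real_of_int (v' 0) - real_of_int (v' i)\<bar> \<le> 2 * Y powr (-a)"
    using Dirichlet_approx_sol[OF Y(1)] unfolding a_def by blast
  have "Y powr (-a) = X powr (-(c*a))" and "Y powr (-M) = X powr (-(c*M))"
    using X by (simp_all add: Y_def powr_powr)
  note Ypowr = this
  define vs where "vs l = (if l = 0 then v else v')" for l :: nat
  show ?thesis
  proof (cases "lin_indep_pts k 2 vs")
    case True
    have "approx_sol k \<zeta> X \<eta> v"
      using v bounds(1) unfolding approx_sol_def by (fastforce intro: order_trans)
    moreover have "approx_sol k \<zeta> X \<eta> v'"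
      using v' Y(2) bounds(2) unfolding approx_sol_def Ypowr(1) by (fastforce intro: order_trans)
    ultimately have "approx_sol k \<zeta> X \<eta> (vs l)" for l
      by (simp add: vs_def)
    then show ?thesis
      using True unfolding has_indep_sols_def by blast
  next
    case False
    have "\<bar>\<zeta> i * real_of_int (v' 0) - real_of_int (v' i)\<bar> \<le> Y powr (-M)" if i: "i \<in> {1..k}" for i
    proof -
      have "\<bar>\<zeta> i * real_of_int (v' 0) - real_of_int (v' i)\<bar>
          \<le> \<bar>real_of_int (v' 0)\<bar> * \<bar>\<zeta> i * real_of_int (v 0) - real_of_int (v i)\<bar>"
        using approx_error_le_if_not_lin_indep_pts_2[OF False, of i \<zeta>] v(1) i by (simp add: vs_def)
      also have "\<dots> \<le> X powr c * (2 * X powr (-a))"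
        using v(3)[OF i] v'(1,2) by (intro mult_mono) (auto simp: Y_def)
      also have "\<dots> = 2 * X powr (c - a)"
        using X by (simp add: powr_add[symmetric])
      finally show ?thesis
        using bounds(3) Ypowr(2) by linarith
    qed
    then have "approx_sol k \<zeta> Y M v'"
      using v'(1,2) unfolding approx_sol_def by auto
    moreover have "lin_indep_pts k 1 (\<lambda>_. v')"
      unfolding lin_indep_pts_1_iff using v'(1) by auto
    ultimately show ?thesis
      unfolding has_indep_sols_def Y_def by blast
  qed
qed

lemma eventually_two_indep_sols_if_not_frequently_one:
  fixes \<zeta> :: "nat \<Rightarrow> real"
  assumes "0 \<le> M" and not_freq: "\<not> (\<exists>\<^sub>F X in at_top. has_indep_sols k \<zeta> 1 X M)"
  shows "\<exists>\<eta>>0. \<forall>\<^sub>F X in at_top. has_indep_sols k \<zeta> 2 X \<eta>"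
proof -
  define a :: real where "a = 1 / (real k + 1)"
  define c where "c = a / (2 * (M + 1))"
  define \<eta> where "\<eta> = c * a / 2"
  have a: "0 < a" "a \<le> 1"
    by (auto simp: a_def)
  have c: "0 < c" "c * (M + 1) = a / 2" "c \<le> 1"
    using a assms(1) by (auto simp: c_def field_simps)
  have \<eta>: "0 < \<eta>" "\<eta> < a" "\<eta> < c * a"
    using a c by (auto simp: \<eta>_def field_simps mult_le_one)
  obtain X0 where X0: "\<And>X. X0 \<le> X \<Longrightarrow> \<not> has_indep_sols k \<zeta> 1 X M"
    using not_freq unfolding not_frequently eventually_at_top_linorder by blast
  have "\<forall>\<^sub>F X in at_top. 1 \<le> X \<and> X0 \<le> X powr c \<and> 2 * X powr (-a) \<le> X powr (-\<eta>)
      \<and> 2 * X powr (-(c*a)) \<le> X powr (-\<eta>) \<and> 2 * X powr (-(a - c)) \<le> X powr (-(c*M))"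
    using a c \<eta> by (intro eventually_conj eventually_ge_at_top eventually_le_powr_at_top
        eventually_mult_powr_le_powr_at_top) (auto simp: algebra_simps)
  then have "\<forall>\<^sub>F X in at_top. has_indep_sols k \<zeta> 2 X \<eta>"
    by (rule eventually_mono)
      (use two_indep_sols_or_one_sol[of X c k \<eta> M \<zeta> for X] X0 c in \<open>auto simp: a_def\<close>)
  then show ?thesis
    using \<eta>(1) by blast
qed

lemma Sup_ereal_eq_infinity_iff:
  "Sup {ereal \<eta> |\<eta>. P \<eta>} = \<infinity> \<longleftrightarrow> (\<forall>M. \<exists>\<eta>\<ge>M. P \<eta>)"
proof
  assume inf: "Sup {ereal \<eta> |\<eta>. P \<eta>} = \<infinity>"
  show "\<forall>M. \<exists>\<eta>\<ge>M. P \<eta>"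
  proof (rule ccontr)
    assume "\<not> (\<forall>M. \<exists>\<eta>\<ge>M. P \<eta>)"
    then obtain M where M: "\<And>\<eta>. P \<eta> \<Longrightarrow> \<eta> < M"
      by (auto simp: not_le)
    have "x \<le> ereal M" if "x \<in> {ereal \<eta> |\<eta>. P \<eta>}" for x
      using that M by (auto intro: less_imp_le)
    then have "Sup {ereal \<eta> |\<eta>. P \<eta>} \<le> ereal M"
      by (rule Sup_least)
    then show False
      using inf by simp
  qed
next
  assume unbounded: "\<forall>M. \<exists>\<eta>\<ge>M. P \<eta>"
  have "ereal M \<le> Sup {ereal \<eta> |\<eta>. P \<eta>}" for M
  proof -
    obtain \<eta> where "M \<le> \<eta>" "P \<eta>"
      using unbounded by blast
    then show ?thesis
      using Sup_upper[of "ereal \<eta>" "{ereal \<eta> |\<eta>. P \<eta>}"]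
      by (blast intro: order_trans ereal_less_eq(3)[THEN iffD2])
  qed
  then show "Sup {ereal \<eta> |\<eta>. P \<eta>} = \<infinity>"
    by (rule ereal_top)
qed

lemma Sup_ereal_eq_0I:
  assumes "\<And>\<eta>. \<eta> < 0 \<Longrightarrow> P \<eta>" "\<And>\<eta>. 0 < \<eta> \<Longrightarrow> \<not> P \<eta>"
  shows "Sup {ereal \<eta> |\<eta>. P \<eta>} = 0"
proof (rule antisym)
  have "x \<le> 0" if "x \<in> {ereal \<eta> |\<eta>. P \<eta>}" for x
    using that assms(2) by (auto simp: not_less[symmetric] zero_ereal_def)
  then show "Sup {ereal \<eta> |\<eta>. P \<eta>} \<le> 0"
    by (rule Sup_least)
  show "0 \<le> Sup {ereal \<eta> |\<eta>. P \<eta>}"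
  proof (rule ereal_le_epsilon2)
    fix e :: real
    assume "0 < e"
    then have "ereal (-e) \<le> Sup {ereal \<eta> |\<eta>. P \<eta>}"
      using assms(1)[of "-e"] by (intro Sup_upper) auto
    then show "0 \<le> Sup {ereal \<eta> |\<eta>. P \<eta>} + ereal e"
      by (cases "Sup {ereal \<eta> |\<eta>. P \<eta>}") auto
  qed
qed

lemma lambda_hat_exp_eq_0_if_lambda_exp_eq_infinity:
  assumes "lambda_exp k 1 \<zeta> = \<infinity>" "2 \<le> j" "j \<le> k + 1"
  shows "lambda_hat_exp k j \<zeta> = 0"
  unfolding lambda_hat_exp_def
proof (rule Sup_ereal_eq_0I)
  fix \<eta> :: real
  assume "0 < \<eta>"
  obtain \<eta>' where "2/\<eta> \<le> \<eta>'" "\<exists>\<^sub>F X in at_top. has_indep_sols k \<zeta> 1 X \<eta>'"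
    using assms(1) unfolding lambda_exp_def Sup_ereal_eq_infinity_iff by blast
  with \<open>0 < \<eta>\<close> have not_ev2: "\<not> (\<forall>\<^sub>F X in at_top. has_indep_sols k \<zeta> 2 X \<eta>)"
    by (intro not_eventually_two_indep_sols) (auto simp: field_simps)
  show "\<not> (\<forall>\<^sub>F X in at_top. has_indep_sols k \<zeta> j X \<eta>)"
  proof
    assume "\<forall>\<^sub>F X in at_top. has_indep_sols k \<zeta> j X \<eta>"
    then have "\<forall>\<^sub>F X in at_top. has_indep_sols k \<zeta> 2 X \<eta>"
      by (rule eventually_mono) (use assms(2) in \<open>auto intro: has_indep_sols_mono\<close>)
    with not_ev2 show False ..
  qed
qed (use assms(3) in \<open>auto intro: eventually_has_indep_sols_neg_exponent\<close>)

lemma lambda_exp_eq_infinity_if_lambda_hat_exp_nonpos: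
  assumes "lambda_hat_exp k 2 \<zeta> \<le> 0"
  shows "lambda_exp k 1 \<zeta> = \<infinity>"
  unfolding lambda_exp_def Sup_ereal_eq_infinity_iff
proof
  fix M :: real
  have "\<exists>\<^sub>F X in at_top. has_indep_sols k \<zeta> 1 X (max 0 M)"
  proof (rule ccontr)
    assume "\<not> ?thesis"
    then obtain \<eta> where "0 < \<eta>" "\<forall>\<^sub>F X in at_top. has_indep_sols k \<zeta> 2 X \<eta>"
      using eventually_two_indep_sols_if_not_frequently_one[of "max 0 M"] by auto
    then have "ereal \<eta> \<le> lambda_hat_exp k 2 \<zeta>"
      unfolding lambda_hat_exp_def by (intro Sup_upper) auto
    then have "ereal \<eta> \<le> 0"
      using assms by (rule order_trans)
    with \<open>0 < \<eta>\<close> show False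
      by (simp add: zero_ereal_def)
  qed
  then show "\<exists>\<eta>\<ge>M. \<exists>\<^sub>F X in at_top. has_indep_sols k \<zeta> 1 X \<eta>"
    by (intro exI[of _ "max 0 M"]) auto
qed

theorem lemma8:
  fixes k :: nat and \<zeta> :: "nat \<Rightarrow> real"
  assumes "k \<ge> 1"
  shows "lambda_exp k 1 \<zeta> = \<infinity> \<longleftrightarrow> (\<forall>j\<in>{2..k+1}. lambda_hat_exp k j \<zeta> = 0)"
proof
  assume "lambda_exp k 1 \<zeta> = \<infinity>"
  then show "\<forall>j\<in>{2..k+1}. lambda_hat_exp k j \<zeta> = 0"
    by (auto intro: lambda_hat_exp_eq_0_if_lambda_exp_eq_infinity)
next
  assume "\<forall>j\<in>{2..k+1}. lambda_hat_exp k j \<zeta> = 0"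
  then have "lambda_hat_exp k 2 \<zeta> = 0"
    using assms by auto
  then show "lambda_exp k 1 \<zeta> = \<infinity>"
    by (intro lambda_exp_eq_infinity_if_lambda_hat_exp_nonpos) simp
qed

end
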